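(* Let $\widetilde E$ be an elliptic curve over $\mathbb{F}_q(T)$ given by a minimal Weierstrass equation $y^2=x^3+B$. If $P$ is a prime of good reduction for $\widetilde E$, then (1) $a^*_{1,P}=-(\lambda_P+\overline\lambda_P)$; (2) $a^*_{1,P^2}=\lambda_P^2+\overline\lambda_P^2+2(|\lambda_P|^2-1)$; (3) $a^*_{1,P^3}=-(\lambda_P^3+\overline\lambda_P^3)-3(|\lambda_P|^2-1)(\lambda_P+\overline\lambda_P)$.
   Context: Fix a prime $p\neq2,3$ and $q=p^r$ with $q\equiv1\pmod6$; primes are monic irreducible polynomials in $\mathbb{F}_q[T]$. Let $\Delta$ be the discriminant of $\widetilde E$; $a_P$ is defined by $\#\widetilde E(P)=q^{\deg P}+1-a_Pq^{\deg P/2}$ ($\#\widetilde E(P)$ = number of $\mathbb{F}_{q^{\deg P}}$-points on the nonsingular locus of the reduction). $L(u,\widetilde E)=\prod_{P\mid\Delta}(1-a_Pu^{\deg P})^{-1}\prod_{P\nmid\Delta}(1-a_Pu^{\deg P}+u^{2\deg P})^{-1}$ and $a^*_{1,P^k}$ are defined by $\frac{L'(u,\widetilde E)}{L(u,\widetilde E)}=\frac1u\sum_P\deg P\sum_{k\ge1}a^*_{1,P^k}u^{k\deg P}$. $(\frac{\cdot}{P})_3$ is the cubic residue symbol modulo $P$, and $\lambda_P=q^{-\deg P/2}\sum_{F\bmod P}\big(\frac{F^2-B}{P}\big)_3$. *)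

theory Defs
  imports "HOL-Analysis.Analysis" "HOL-Computational_Algebra.Computational_Algebra"
begin

text \<open>Ambient finite field F_q is a type 'a :: {finite, field}; q = CARD('a).
  Polynomials in F_q[T] are 'a poly.  Primes are monic irreducible polynomials.\<close>

definition prime_poly :: "'a::field poly \<Rightarrow> bool" where
  "prime_poly P \<longleftrightarrow> irreducible P \<and> lead_coeff P = 1"

text \<open>Discriminant of y^2 = x^3 + B: -16 (4 * 0^3 + 27 B^2) = -432 B^2.\<close>
definition disc_short :: "'a::field poly \<Rightarrow> 'a poly" where
  "disc_short B = smult (- 432) (B ^ 2)"

text \<open>Minimal (integral) Weierstrass equation y^2 = x^3 + B, B in F_q[T], p <> 2,3:
  nonsingular (discriminant nonzero) and minimal at every prime P, which for
  a model with c4 = 0 means v_P(Delta) < 12, i.e. P^6 does not divide B.\<close>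
definition minimal_weierstrass_short :: "'a::field poly \<Rightarrow> bool" where
  "minimal_weierstrass_short B \<longleftrightarrow>
     disc_short B \<noteq> 0 \<and> (\<forall>P. prime_poly P \<longrightarrow> \<not> P ^ 6 dvd B)"

definition good_reduction :: "'a::field poly \<Rightarrow> 'a poly \<Rightarrow> bool" where
  "good_reduction B P \<longleftrightarrow> \<not> P dvd disc_short B"

text \<open>Residue field F_q[T]/P represented by the polynomials of degree < deg P.\<close>
definition residues_mod :: "'a::field poly \<Rightarrow> 'a poly set" where
  "residues_mod P = {F. degree F < degree P}"

text \<open>Number of points (over F_q[T]/P = F_{q^deg P}) on the nonsingular locus of
  the reduction mod P of y^2 = x^3 + B: nonsingular affine points plus the
  point at infinity (which is always nonsingular).\<close>
definition num_points_red :: "'a::field poly \<Rightarrow> 'a poly \<Rightarrow> nat" where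
  "num_points_red B P =
     card {(x, y). x \<in> residues_mod P \<and> y \<in> residues_mod P \<and>
                   (y ^ 2 - x ^ 3 - B) mod P = 0 \<and>
                   \<not> ((smult 2 y) mod P = 0 \<and> (smult (-3) (x ^ 2)) mod P = 0)} + 1"

definition a_coeff :: "'a::{finite,field} poly \<Rightarrow> 'a poly \<Rightarrow> real" where
  "a_coeff B P =
     (real CARD('a) ^ degree P + 1 - real (num_points_red B P))
       / (sqrt (real CARD('a)) ^ degree P)"

definition L_local :: "'a::{finite,field} poly \<Rightarrow> 'a poly \<Rightarrow> real fps" where
  "L_local B P =
     (let d = degree P; a = a_coeff B P in
      if P dvd disc_short B then inverse (1 - fps_const a * fps_X ^ d)
      else inverse (1 - fps_const a * fps_X ^ d + fps_X ^ (2 * d)))"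

text \<open>a*_{1,P^k}: the contribution of P to L'/L = (1/u) sum_P deg P sum_k a*_{1,P^k} u^(k deg P),
  i.e. (coefficient of u^(k deg P - 1) in the logarithmic derivative of the local factor)/deg P.\<close>
definition a_star :: "'a::{finite,field} poly \<Rightarrow> 'a poly \<Rightarrow> nat \<Rightarrow> real" where
  "a_star B P k =
     fps_nth (fps_deriv (L_local B P) * inverse (L_local B P)) (k * degree P - 1)
       / real (degree P)"

text \<open>Cubic residue symbol (F/P)_3 in mu_3(F_q), transported to C via the embedding
  sending the fixed primitive cube root of unity zeta in F_q to exp(2 pi i / 3).
  (F/P)_3 = 0 if P | F, otherwise the cube root of unity congruent to
  F^((q^deg P - 1)/3) mod P.\<close>
definition cubic_sym :: "'a::{finite,field} \<Rightarrow> 'a poly \<Rightarrow> 'a poly \<Rightarrow> complex" where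
  "cubic_sym \<zeta> P F =
     (if P dvd F then 0
      else (THE w. \<exists>j<(3::nat). w = cis (2 * pi / 3) ^ j \<and>
              F ^ ((CARD('a) ^ degree P - 1) div 3) mod P = [:\<zeta> ^ j:]))"

definition lambda_P :: "'a::{finite,field} \<Rightarrow> 'a poly \<Rightarrow> 'a poly \<Rightarrow> complex" where
  "lambda_P \<zeta> B P =
     complex_of_real (1 / sqrt (real CARD('a)) ^ degree P) *
       (\<Sum>F\<in>residues_mod P. cubic_sym \<zeta> P (F ^ 2 - B))"

end

theory Submission
  imports Defs "HOL-Algebra.Multiplicative_Group"
begin

(* At a prime P of degree d and good reduction the local factor of L(u, E) is 1/f with
   f = 1 - a_P u^d + u^(2d).  Since (-f'/f) f = -f', the coefficients of the logarithmic
   derivative satisfy a three-term recurrence, which gives a*_{1,P^k} = a_P, a_P^2 - 2 and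
   a_P^3 - 3 a_P for k = 1, 2, 3.  The three formulas then follow from
   a_P = -(lambda_P + cnj lambda_P) and |lambda_P|^2 = lambda_P cnj lambda_P.

   For a_P, count points.  F_q[T]/P is a field with q^d = 1 (mod 3) elements and cyclic unit
   group, so a nonzero c is a cube iff c^((q^d - 1)/3) = 1, and then it has exactly the three
   cube roots x, zeta x, zeta^2 x.  Hence x^3 = c has 1 + chi c + cnj (chi c) solutions for the
   cubic residue character chi, and summing over y gives #E(P) = q^d + 1 + S + cnj S with
   S = sum_y chi (y^2 - B) = q^(d/2) lambda_P.  No affine point is singular, as P does not
   divide B. *)

lemma fps_logderiv_inverse:
  fixes f :: "'a::field fps"
  assumes "f $ 0 \<noteq> 0"
  shows "fps_deriv (inverse f) * inverse (inverse f) = - fps_deriv f * inverse f"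
  using assms
  by (simp add: fps_inverse_deriv fps_inverse_idempotent power2_eq_square
      inverse_mult_eq_1 mult.assoc)

lemma logderiv_euler_factor_nth:
  fixes a :: "'a::field"
  assumes d: "d \<ge> 1"
  defines "f \<equiv> 1 - fps_const a * fps_X ^ d + fps_X ^ (2 * d)"
  shows "(- fps_deriv f * inverse f) $ n =
           - of_nat (n + 1) * f $ (n + 1)
           + a * (if d \<le> n then (- fps_deriv f * inverse f) $ (n - d) else 0)
           - (if 2 * d \<le> n then (- fps_deriv f * inverse f) $ (n - 2 * d) else 0)"
proof -
  define h where "h = - fps_deriv f * inverse f"
  have "f $ 0 = 1" using d by (simp add: f_def)
  then have "h * f = - fps_deriv f" by (simp add: h_def mult.assoc inverse_mult_eq_1)
  moreover have "h * f = h - fps_const a * (fps_X ^ d * h) + fps_X ^ (2 * d) * h"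
    by (simp add: f_def algebra_simps)
  ultimately have "h = - fps_deriv f + fps_const a * (fps_X ^ d * h) - fps_X ^ (2 * d) * h"
    by (simp add: algebra_simps)
  then have "h $ n = (- fps_deriv f + fps_const a * (fps_X ^ d * h) - fps_X ^ (2 * d) * h) $ n"
    by simp
  then show ?thesis
    unfolding h_def[symmetric]
    by (simp only: fps_sub_nth fps_add_nth fps_neg_nth fps_mult_left_const_nth
        fps_X_power_mult_nth fps_deriv_nth) (simp add: algebra_simps)
qed

lemma logderiv_euler_factor_coeffs:
  fixes a :: "'a::field"
  assumes d: "d \<ge> 1"
  defines "f \<equiv> 1 - fps_const a * fps_X ^ d + fps_X ^ (2 * d)"
  defines "h \<equiv> - fps_deriv f * inverse f"
  shows "h $ (d - 1) = a * of_nat d"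
    and "h $ (2 * d - 1) = (a ^ 2 - 2) * of_nat d"
    and "h $ (3 * d - 1) = (a ^ 3 - 3 * a) * of_nat d"
proof -
  have f_nth: "f $ n = (if n = 0 then 1 else 0) - (if n = d then a else 0) + (if n = 2 * d then 1 else 0)" for n
    using d by (simp add: f_def fps_X_power_iff)
  note rec = logderiv_euler_factor_nth[OF d, of a, folded f_def h_def]
  show h1: "h $ (d - 1) = a * of_nat d"
    using rec[of "d - 1"] f_nth[of d] d by (simp add: of_nat_diff)
  have idx2: "2 * d - 1 - d = d - 1" "\<not> 2 * d \<le> 2 * d - 1" "d \<le> 2 * d - 1" "2 * d - 1 + 1 = 2 * d"
    using d by auto
  show h2: "h $ (2 * d - 1) = (a ^ 2 - 2) * of_nat d"
    using rec[of "2 * d - 1"] f_nth[of "2 * d"] d h1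
    by (simp only: idx2 if_True if_False) (simp add: of_nat_diff power2_eq_square algebra_simps)
  have idx3: "3 * d - 1 - d = 2 * d - 1" "3 * d - 1 - 2 * d = d - 1" "d \<le> 3 * d - 1"
      "2 * d \<le> 3 * d - 1" "3 * d - 1 + 1 = 3 * d"
    using d by auto
  show "h $ (3 * d - 1) = (a ^ 3 - 3 * a) * of_nat d"
    using rec[of "3 * d - 1"] f_nth[of "3 * d"] d h1 h2
    by (simp only: idx3 if_True if_False)
      (simp add: of_nat_diff power2_eq_square power3_eq_cube algebra_simps)
qed

lemma a_star_good_reduction:
  assumes "degree P \<ge> 1" "good_reduction B P"
  shows "a_star B P 1 = a_coeff B P"
    and "a_star B P 2 = a_coeff B P ^ 2 - 2"
    and "a_star B P 3 = a_coeff B P ^ 3 - 3 * a_coeff B P"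
proof -
  define f where "f = 1 - fps_const (a_coeff B P) * fps_X ^ degree P + fps_X ^ (2 * degree P)"
  have "f $ 0 \<noteq> 0" using assms(1) by (simp add: f_def)
  moreover have "L_local B P = inverse f"
    using assms(2) by (simp add: L_local_def good_reduction_def f_def Let_def)
  ultimately have star: "a_star B P k = (- fps_deriv f * inverse f) $ (k * degree P - 1) / degree P"
    for k
    unfolding a_star_def using fps_logderiv_inverse by metis
  note h = logderiv_euler_factor_coeffs[OF assms(1), of "a_coeff B P", folded f_def]
  have "real (degree P) > 0" using assms(1) by simp
  then show "a_star B P 1 = a_coeff B P"
    and "a_star B P 2 = a_coeff B P ^ 2 - 2"
    and "a_star B P 3 = a_coeff B P ^ 3 - 3 * a_coeff B P"
    unfolding star mult_1 h by simp_all
qed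

lemma card_polys_degree_less:
  assumes "n \<ge> 1"
  shows "finite {p::'a::{finite,zero} poly. degree p < n}"
    and "card {p::'a::{finite,zero} poly. degree p < n} = CARD('a) ^ n"
proof -
  have "finite {p::'a poly. degree p < n} \<and> card {p::'a poly. degree p < n} = CARD('a) ^ n"
    using assms
  proof (induction n rule: dec_induct)
    case base
    have "{p::'a poly. degree p < 1} = range (\<lambda>c. [:c:])"
      by (auto elim!: degree_eq_zeroE)
    moreover have "inj (\<lambda>c::'a. [:c:])" by (auto simp: inj_on_def)
    ultimately show ?case by (simp add: card_image)
  next
    case (step n)
    have "{p::'a poly. degree p < Suc n} = (\<lambda>(c, p). pCons c p) ` (UNIV \<times> {p. degree p < n})"
    proof (intro Set.set_eqI iffI)
      fix p :: "'a poly"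
      assume "p \<in> {p. degree p < Suc n}"
      moreover obtain c q where "p = pCons c q" by (cases p)
      ultimately show "p \<in> (\<lambda>(c, p). pCons c p) ` (UNIV \<times> {p. degree p < n})"
        using step.hyps by (cases "q = 0") (auto simp: image_iff)
    qed (auto simp: degree_pCons_eq_if)
    moreover have "inj_on (\<lambda>(c, p). pCons c p) (UNIV \<times> {p::'a poly. degree p < n})"
      by (auto simp: inj_on_def)
    ultimately show ?case using step.IH by (simp add: card_image card_cartesian_product)
  qed
  then show "finite {p::'a poly. degree p < n}" "card {p::'a poly. degree p < n} = CARD('a) ^ n"
    by blast+
qed

lemma prime_poly_imp_prime_elem: "prime_poly P \<Longrightarrow> prime_elem P"
  by (simp add: prime_poly_def field_poly_irreducible_imp_prime)

lemma prime_elem_poly_degree_pos: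
  fixes P :: "'a::field poly"
  shows "prime_elem P \<Longrightarrow> degree P \<ge> 1"
  by (metis is_unit_iff_degree less_one not_less prime_elem_def)

lemma dvd_degree_less_imp_zero:
  fixes P x :: "'a::field poly"
  shows "degree x < degree P \<Longrightarrow> P dvd x \<Longrightarrow> x = 0"
  by (metis dvd_imp_degree_le not_less)

lemma finite_residues_mod:
  fixes P :: "'a::{finite,field} poly"
  shows "degree P \<ge> 1 \<Longrightarrow> finite (residues_mod P)"
  unfolding residues_mod_def by (rule card_polys_degree_less(1))

lemma card_residues_mod:
  fixes P :: "'a::{finite,field} poly"
  shows "degree P \<ge> 1 \<Longrightarrow> card (residues_mod P) = CARD('a) ^ degree P"
  unfolding residues_mod_def by (rule card_polys_degree_less(2))

lemma mod_in_residues_mod: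
  fixes P x :: "'a::field poly"
  assumes "degree P \<ge> 1"
  shows "x mod P \<in> residues_mod P"
proof -
  have "P \<noteq> 0" using assms by auto
  then show ?thesis
    using assms degree_mod_less[of P x] by (cases "x mod P = 0") (auto simp: residues_mod_def)
qed

definition residue_ring :: "'a::field poly \<Rightarrow> 'a poly ring" where
  "residue_ring P = \<lparr>carrier = residues_mod P, monoid.mult = (\<lambda>x y. (x * y) mod P),
     one = 1, zero = 0, add = (+)\<rparr>"

lemma residue_ring_simps:
  "carrier (residue_ring P) = residues_mod P"
  "x \<otimes>\<^bsub>residue_ring P\<^esub> y = (x * y) mod P"
  "x \<oplus>\<^bsub>residue_ring P\<^esub> y = x + y"
  "\<one>\<^bsub>residue_ring P\<^esub> = 1"
  "\<zero>\<^bsub>residue_ring P\<^esub> = 0"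
  by (simp_all add: residue_ring_def)

lemma cring_residue_ring:
  fixes P :: "'a::field poly"
  assumes P: "degree P \<ge> 1"
  shows "cring (residue_ring P)"
proof (rule cringI)
  show "abelian_group (residue_ring P)"
  proof (rule abelian_groupI)
    fix x assume "x \<in> carrier (residue_ring P)"
    then have "- x \<in> carrier (residue_ring P) \<and> - x \<oplus>\<^bsub>residue_ring P\<^esub> x = \<zero>\<^bsub>residue_ring P\<^esub>"
      by (simp add: residue_ring_simps residues_mod_def)
    then show "\<exists>y\<in>carrier (residue_ring P). y \<oplus>\<^bsub>residue_ring P\<^esub> x = \<zero>\<^bsub>residue_ring P\<^esub>"
      by blast
  qed (use P in \<open>auto simp: residue_ring_simps residues_mod_def degree_add_less\<close>)
  show "comm_monoid (residue_ring P)"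
  proof (rule comm_monoidI)
    fix x y z :: "'a poly"
    have "(x * y mod P) * z mod P = (x * y * z) mod P" by (rule mod_mult_left_eq)
    also have "\<dots> = (x * (y * z mod P)) mod P" by (simp add: mod_mult_right_eq mult.assoc)
    finally show "x \<otimes>\<^bsub>residue_ring P\<^esub> y \<otimes>\<^bsub>residue_ring P\<^esub> z =
        x \<otimes>\<^bsub>residue_ring P\<^esub> (y \<otimes>\<^bsub>residue_ring P\<^esub> z)"
      by (simp add: residue_ring_simps)
  qed (use P mod_in_residues_mod[OF P] in
      \<open>auto simp: residue_ring_simps residues_mod_def mod_poly_less mult.commute\<close>)
qed (simp add: residue_ring_simps distrib_right poly_mod_add_left)

lemma inverse_mod_prime_poly:
  fixes P x :: "'a::{finite,field} poly"
  assumes P: "prime_elem P" and x: "\<not> P dvd x"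
  obtains y where "y \<in> residues_mod P" "(x * y) mod P = 1"
proof -
  have deg: "degree P \<ge> 1" using P by (rule prime_elem_poly_degree_pos)
  have "inj_on (\<lambda>y. (x * y) mod P) (residues_mod P)"
  proof (rule inj_onI)
    fix y z assume "y \<in> residues_mod P" "z \<in> residues_mod P" "(x * y) mod P = (x * z) mod P"
    then have "P dvd x * (y - z)" "degree (y - z) < degree P"
      by (auto simp: residues_mod_def mod_eq_dvd_iff right_diff_distrib intro: degree_diff_less)
    then show "y = z"
      using P x by (auto simp: prime_elem_dvd_mult_iff dest: dvd_degree_less_imp_zero)
  qed
  then have "card ((\<lambda>y. (x * y) mod P) ` residues_mod P) = card (residues_mod P)"
    by (rule card_image)
  moreover have "(\<lambda>y. (x * y) mod P) ` residues_mod P \<subseteq> residues_mod P"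
    using mod_in_residues_mod[OF deg] by auto
  ultimately have onto: "(\<lambda>y. (x * y) mod P) ` residues_mod P = residues_mod P"
    using card_subset_eq[OF finite_residues_mod[OF deg]] by blast
  have "1 \<in> residues_mod P" using deg by (simp add: residues_mod_def)
  then have "1 \<in> (\<lambda>y. (x * y) mod P) ` residues_mod P" by (simp only: onto)
  then obtain y where "y \<in> residues_mod P" "1 = (x * y) mod P" by (rule imageE)
  then show ?thesis using that by simp
qed

lemma field_residue_ring:
  fixes P :: "'a::{finite,field} poly"
  assumes P: "prime_elem P"
  shows "field (residue_ring P)"
proof (rule cring.field_intro2)
  show "cring (residue_ring P)" using P prime_elem_poly_degree_pos cring_residue_ring by blast
  show "\<zero>\<^bsub>residue_ring P\<^esub> \<noteq> \<one>\<^bsub>residue_ring P\<^esub>" by (simp add: residue_ring_simps)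
next
  fix x assume x: "x \<in> carrier (residue_ring P) - {\<zero>\<^bsub>residue_ring P\<^esub>}"
  then have "\<not> P dvd x"
    by (auto simp: residue_ring_simps residues_mod_def dest: dvd_degree_less_imp_zero)
  then obtain y where "y \<in> residues_mod P" "(x * y) mod P = 1"
    using P inverse_mod_prime_poly by blast
  with x show "x \<in> Units (residue_ring P)"
    by (auto simp: Units_def residue_ring_simps mult.commute)
qed

lemma residue_ring_pow:
  fixes P :: "'a::field poly"
  assumes "degree P \<ge> 1"
  shows "x [^]\<^bsub>residue_ring P\<^esub> (n::nat) = x ^ n mod P"
  by (induction n) (use assms in \<open>simp_all add: residue_ring_def mod_poly_less mod_mult_right_eq mult.commute\<close>)

context field
begin

lemma finite_field_pow_order_minus_one:
  assumes "finite (carrier R)" "c \<in> carrier R" "c \<noteq> \<zero>"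
  shows "c [^] (order R - 1) = \<one>"
proof -
  interpret G: group "mult_of R" rewrites
      "([^]\<^bsub>mult_of R\<^esub>) = (([^]) :: _ \<Rightarrow> nat \<Rightarrow> _)" and "\<one>\<^bsub>mult_of R\<^esub> = \<one>"
    by (rule field_mult_group) (simp_all add: fun_eq_iff nat_pow_def)
  show ?thesis
    using G.pow_order_eq_1[of c] assms by (simp add: order_mult_of)
qed

lemma finite_field_cube_iff:
  assumes fin: "finite (carrier R)" and card: "order R = 3 * m + 1"
    and c: "c \<in> carrier R" "c \<noteq> \<zero>"
  shows "(\<exists>x\<in>carrier R. x [^] (3::nat) = c) \<longleftrightarrow> c [^] m = \<one>"
proof
  assume "\<exists>x\<in>carrier R. x [^] (3::nat) = c"
  then obtain x where x: "x \<in> carrier R" "x [^] (3::nat) = c" by blast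
  with c have "x \<noteq> \<zero>" by (auto simp: nat_pow_zero)
  then have "x [^] (order R - 1) = \<one>"
    using finite_field_pow_order_minus_one fin x(1) by blast
  moreover have "c [^] m = x [^] (3 * m)"
    using nat_pow_pow[OF x(1), of 3 m] x(2) by simp
  ultimately show "c [^] m = \<one>"
    using card by simp
next
  assume cm: "c [^] m = \<one>"
  interpret G: group "mult_of R" rewrites
      "([^]\<^bsub>mult_of R\<^esub>) = (([^]) :: _ \<Rightarrow> nat \<Rightarrow> _)" and "\<one>\<^bsub>mult_of R\<^esub> = \<one>"
    by (rule field_mult_group) (simp_all add: fun_eq_iff nat_pow_def)
  obtain a where a: "a \<in> carrier (mult_of R)"
      and gen: "carrier (mult_of R) = {a [^] i | i::nat. i \<in> UNIV}"
    using finite_field_mult_group_has_gen[OF fin] by blast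
  have "G.ord a = card (carrier (mult_of R))"
    using G.generate_pow_card[OF a] G.generate_pow_on_finite_carrier[OF _ a] fin gen
    by (simp add: finite_mult_of)
  also have "\<dots> = 3 * m" using card fin by (simp add: order_mult_of[symmetric] order_def)
  finally have ord_a: "G.ord a = 3 * m" .
  have "card {\<zero>, \<one>} \<le> order R"
    unfolding order_def using fin by (intro card_mono) auto
  then have "m > 0" using card by simp
  obtain k :: nat where k: "c = a [^] k" using gen c by auto
  have "a [^] (k * m) = \<one>" using cm nat_pow_pow[of a k m] a k by simp
  then have "3 * m dvd k * m" using G.pow_eq_id[OF a] ord_a by simp
  then have "3 dvd k" using \<open>m > 0\<close> by simp
  then have "(a [^] (k div 3)) [^] (3::nat) = c" using nat_pow_pow[of a "k div 3" 3] a k by simp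
  moreover have "a [^] (k div 3) \<in> carrier R" using a by simp
  ultimately show "\<exists>x\<in>carrier R. x [^] (3::nat) = c" by blast
qed

end

lemma order_residue_ring:
  fixes P :: "'a::{finite,field} poly"
  assumes "degree P \<ge> 1"
  shows "order (residue_ring P) = CARD('a) ^ degree P"
  using card_residues_mod[OF assms] by (simp add: order_def residue_ring_simps)

lemma pow_card_minus_one_mod_prime_poly:
  fixes P c :: "'a::{finite,field} poly"
  assumes P: "prime_elem P" and c: "c \<in> residues_mod P" "c \<noteq> 0"
  shows "c ^ (CARD('a) ^ degree P - 1) mod P = 1"
proof -
  interpret field "residue_ring P" using P by (rule field_residue_ring)
  have deg: "degree P \<ge> 1" using P by (rule prime_elem_poly_degree_pos)
  show ?thesis
    using finite_field_pow_order_minus_one[of c] c finite_residues_mod[OF deg]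
    by (simp add: order_residue_ring[OF deg] residue_ring_pow[OF deg] residue_ring_simps)
qed

lemma cube_mod_prime_poly_iff:
  fixes P c :: "'a::{finite,field} poly"
  assumes P: "prime_elem P" and card: "CARD('a) ^ degree P = 3 * m + 1"
    and c: "c \<in> residues_mod P" "c \<noteq> 0"
  shows "(\<exists>x\<in>residues_mod P. x ^ 3 mod P = c) \<longleftrightarrow> c ^ m mod P = 1"
proof -
  interpret field "residue_ring P" using P by (rule field_residue_ring)
  have deg: "degree P \<ge> 1" using P by (rule prime_elem_poly_degree_pos)
  show ?thesis
    using finite_field_cube_iff[of m c] c card finite_residues_mod[OF deg]
    by (simp add: order_residue_ring[OF deg] residue_ring_pow[OF deg] residue_ring_simps)
qed

lemma cube_diff_factor:
  fixes x y w :: "'a::comm_ring_1"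
  assumes w: "1 + w + w ^ 2 = 0"
  shows "x ^ 3 - y ^ 3 = (x - y) * (x - w * y) * (x - w ^ 2 * y)"
proof -
  have "w ^ 3 = 1"
  proof -
    have "w ^ 3 - 1 = (w - 1) * (1 + w + w ^ 2)" by (simp add: algebra_simps power2_eq_square power3_eq_cube)
    then show ?thesis using w by simp
  qed
  moreover have "(x - y) * (x - w * y) * (x - w ^ 2 * y) =
      x ^ 3 - (1 + w + w ^ 2) * x ^ 2 * y + w * (1 + w + w ^ 2) * x * y ^ 2 - w ^ 3 * y ^ 3"
    by (simp add: algebra_simps power2_eq_square power3_eq_cube)
  ultimately show ?thesis using w by simp
qed

lemma of_nat_prime_nonzero:
  assumes "prime CHAR('a::semiring_1)" "prime p" "p \<noteq> CHAR('a)"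
  shows "(of_nat p :: 'a) \<noteq> 0"
  using assms by (metis of_nat_eq_0_iff_char_dvd primes_dvd_imp_eq)

lemma cube_root_of_unity_trace:
  assumes "0 < j" "j < (3::nat)"
  shows "1 + cis (2 * pi / 3) ^ j + cnj (cis (2 * pi / 3) ^ j) = 0"
proof -
  define t where "t = real j * (2 * pi / 3)"
  have "j = 1 \<or> j = 2" using assms by auto
  then have "cos t = - 1 / 2"
  proof
    assume "j = 2"
    then have "t = 2 * pi - 2 * pi / 3" by (simp add: t_def)
    then show ?thesis by (simp only: cos_2pi_minus cos_120)
  qed (simp add: t_def cos_120)
  moreover have "cis (2 * pi / 3) ^ j = cis t" unfolding t_def by (rule Complex.DeMoivre)
  ultimately show ?thesis by (simp del: complex_cnj_power add: complex_eq_iff)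
qed

lemma cubic_sym_mod: "cubic_sym \<zeta> P (F mod P) = cubic_sym \<zeta> P F"
  unfolding cubic_sym_def by (simp add: power_mod dvd_mod_iff)

locale cubic_residue_setup =
  fixes P :: "'a::{finite,field} poly" and \<zeta> :: 'a and m :: nat
  assumes prime: "prime_elem P"
    and zeta_cube: "\<zeta> ^ 3 = 1" and zeta_ne_1: "\<zeta> \<noteq> 1"
    and card: "CARD('a) ^ degree P = 3 * m + 1"
begin

lemma degree_pos: "degree P \<ge> 1"
  using prime by (rule prime_elem_poly_degree_pos)

lemma zeta_sum: "1 + \<zeta> + \<zeta> ^ 2 = 0"
proof -
  have "(\<zeta> - 1) * (1 + \<zeta> + \<zeta> ^ 2) = \<zeta> ^ 3 - 1"
    by (simp add: algebra_simps power2_eq_square power3_eq_cube)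
  then show ?thesis using zeta_cube zeta_ne_1 by simp
qed

lemma zeta_powers_distinct: "\<zeta> ^ 2 \<noteq> 1" "\<zeta> ^ 2 \<noteq> \<zeta>"
  using zeta_sum zeta_ne_1 zeta_cube by (auto simp: power2_eq_square power3_eq_cube)

lemma zeta_power_inj:
  assumes "j < 3" "k < 3" "\<zeta> ^ j = \<zeta> ^ k"
  shows "j = k"
proof -
  have "j \<in> {0, 1, 2}" "k \<in> {0, 1, 2}" using assms by auto
  then show ?thesis
    using assms(3) zeta_ne_1 zeta_powers_distinct by (auto simp: eq_commute[of 1])
qed

lemma cube_roots_mod:
  fixes x y :: "'a poly"
  assumes "x \<in> residues_mod P" "y \<in> residues_mod P" "x ^ 3 mod P = y ^ 3 mod P"
  shows "x = y \<or> x = Polynomial.smult \<zeta> y \<or> x = Polynomial.smult (\<zeta> ^ 2) y"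
proof -
  have "1 + [:\<zeta>:] + [:\<zeta>:] ^ 2 = [:1 + \<zeta> + \<zeta> ^ 2:]"
    by (simp add: poly_const_pow one_pCons)
  then have "x ^ 3 - y ^ 3 = (x - y) * (x - Polynomial.smult \<zeta> y) * (x - Polynomial.smult (\<zeta> ^ 2) y)"
    using cube_diff_factor[of "[:\<zeta>:]" x y] zeta_sum by (simp add: poly_const_pow)
  moreover have "P dvd x ^ 3 - y ^ 3" using assms(3) by (simp add: mod_eq_dvd_iff)
  ultimately have "P dvd x - y \<or> P dvd x - Polynomial.smult \<zeta> y \<or> P dvd x - Polynomial.smult (\<zeta> ^ 2) y"
    using prime by (simp add: prime_elem_dvd_mult_iff)
  moreover have "degree (x - y) < degree P" "degree (x - Polynomial.smult a y) < degree P" for a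
    using assms(1,2) by (auto simp: residues_mod_def intro!: degree_diff_less le_less_trans[OF degree_smult_le])
  ultimately show ?thesis
    using dvd_degree_less_imp_zero[of "x - y" P]
      dvd_degree_less_imp_zero[of "x - Polynomial.smult \<zeta> y" P]
      dvd_degree_less_imp_zero[of "x - Polynomial.smult (\<zeta> ^ 2) y" P]
    by auto
qed

lemma card_cube_roots_mod:
  assumes "c \<noteq> 0" "x0 \<in> residues_mod P" "x0 ^ 3 mod P = c"
  shows "card {x \<in> residues_mod P. x ^ 3 mod P = c} = 3"
proof -
  have x0: "x0 \<noteq> 0" using assms by auto
  have "(\<zeta> ^ 2) ^ 3 = 1" using zeta_cube by (metis power_mult_distrib power_one power_mult mult.commute)
  then have "{x \<in> residues_mod P. x ^ 3 mod P = c} = {x0, Polynomial.smult \<zeta> x0, Polynomial.smult (\<zeta> ^ 2) x0}"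
    using assms cube_roots_mod[of _ x0] zeta_cube
    by (auto simp: residues_mod_def smult_power intro: le_less_trans[OF degree_smult_le])
  moreover have "Polynomial.smult a x0 \<noteq> Polynomial.smult b x0" if "a \<noteq> b" for a b
    using that x0 by (metis diff_self eq_iff_diff_eq_0 smult_diff_left smult_eq_0_iff)
  then have "x0 \<noteq> Polynomial.smult \<zeta> x0" "x0 \<noteq> Polynomial.smult (\<zeta> ^ 2) x0"
      "Polynomial.smult \<zeta> x0 \<noteq> Polynomial.smult (\<zeta> ^ 2) x0"
    using zeta_ne_1 zeta_powers_distinct by (metis smult_1_left)+
  ultimately show ?thesis by simp
qed

lemma power_m_mod_cube_root_of_unity:
  assumes "c \<in> residues_mod P" "c \<noteq> 0"
  obtains j where "j < 3" "c ^ m mod P = [:\<zeta> ^ j:]"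
proof -
  have "(c ^ m mod P) ^ 3 mod P = c ^ (CARD('a) ^ degree P - 1) mod P"
    using card by (simp add: power_mod power_mult[symmetric] mult.commute)
  also have "\<dots> = 1 ^ 3 mod P"
    using pow_card_minus_one_mod_prime_poly[OF prime] assms degree_pos by (simp add: mod_poly_less)
  moreover have "c ^ m mod P \<in> residues_mod P" "1 \<in> residues_mod P"
    using degree_pos mod_in_residues_mod by (auto simp: residues_mod_def)
  ultimately have "c ^ m mod P = 1 \<or> c ^ m mod P = Polynomial.smult \<zeta> 1 \<or> c ^ m mod P = Polynomial.smult (\<zeta> ^ 2) 1"
    using cube_roots_mod[of "c ^ m mod P" 1] by simp
  then show ?thesis
    using that[of 0] that[of 1] that[of 2] by (auto simp: one_pCons)
qed

lemma cubic_sym_eq_cis_power: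
  assumes "c \<in> residues_mod P" "c \<noteq> 0" "j < 3" "c ^ m mod P = [:\<zeta> ^ j:]"
  shows "cubic_sym \<zeta> P c = cis (2 * pi / 3) ^ j"
proof -
  have "\<not> P dvd c" using assms(1,2) by (auto simp: residues_mod_def dest: dvd_degree_less_imp_zero)
  moreover have "(CARD('a) ^ degree P - 1) div 3 = m" using card by simp
  moreover have "\<zeta> ^ k = \<zeta> ^ j \<Longrightarrow> k < 3 \<Longrightarrow> k = j" for k
    using zeta_power_inj assms(3) by blast
  ultimately show ?thesis
    unfolding cubic_sym_def using assms(3,4) by (auto intro!: the_equality)
qed

lemma card_cube_roots_mod_eq:
  assumes c: "c \<in> residues_mod P"
  shows "of_nat (card {x \<in> residues_mod P. x ^ 3 mod P = c})
           = 1 + cubic_sym \<zeta> P c + cnj (cubic_sym \<zeta> P c)"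
proof -
  consider "c = 0" | "c \<noteq> 0" "c ^ m mod P = 1"
    | j where "c \<noteq> 0" "0 < j" "j < 3" "c ^ m mod P = [:\<zeta> ^ j:]"
    using power_m_mod_cube_root_of_unity[OF c] by (metis gr0I one_pCons power_0)
  then show ?thesis
  proof cases
    case 1
    then have "{x \<in> residues_mod P. x ^ 3 mod P = c} = {0}"
      using prime degree_pos
      by (auto simp: residues_mod_def prime_elem_dvd_power_iff dest: dvd_degree_less_imp_zero)
    then show ?thesis using 1 by (simp add: cubic_sym_def)
  next
    case 2
    then obtain x0 where "x0 \<in> residues_mod P" "x0 ^ 3 mod P = c"
      using cube_mod_prime_poly_iff[OF prime card] c by blast
    then show ?thesis
      using 2 c card_cube_roots_mod cubic_sym_eq_cis_power[of c 0] by (simp add: one_pCons)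
  next
    case 3
    then have "c ^ m mod P \<noteq> 1" using zeta_power_inj[of j 0] by (auto simp: one_pCons)
    then have no_roots: "{x \<in> residues_mod P. x ^ 3 mod P = c} = {}"
      using cube_mod_prime_poly_iff[OF prime card, of c] c 3 by blast
    show ?thesis
      unfolding no_roots using 3 c cubic_sym_eq_cis_power cube_root_of_unity_trace by simp
  qed
qed

lemma curve_point_nonsingular:
  assumes B: "\<not> P dvd B" and two: "(2::'a) \<noteq> 0" and three: "(3::'a) \<noteq> 0"
    and xy: "x \<in> residues_mod P" "y \<in> residues_mod P" and on_curve: "(y ^ 2 - x ^ 3 - B) mod P = 0"
  shows "\<not> (Polynomial.smult 2 y mod P = 0 \<and> Polynomial.smult (- 3) (x ^ 2) mod P = 0)"
proof
  assume "Polynomial.smult 2 y mod P = 0 \<and> Polynomial.smult (- 3) (x ^ 2) mod P = 0"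
  then have "P dvd y" "P dvd x"
    using two three prime by (auto simp: dvd_smult_iff prime_elem_dvd_power_iff)
  then have "y = 0" "x = 0"
    using xy by (auto simp: residues_mod_def dest: dvd_degree_less_imp_zero)
  then show False using on_curve B by (simp add: mod_eq_0_iff_dvd)
qed

lemma nonsingular_points_eq_Sigma:
  assumes "\<not> P dvd B" "(2::'a) \<noteq> 0" "(3::'a) \<noteq> 0"
  shows "{(x, y). x \<in> residues_mod P \<and> y \<in> residues_mod P \<and> (y ^ 2 - x ^ 3 - B) mod P = 0 \<and>
            \<not> (Polynomial.smult 2 y mod P = 0 \<and> Polynomial.smult (- 3) (x ^ 2) mod P = 0)}
       = (\<lambda>(y, x). (x, y)) `
           (SIGMA y:residues_mod P. {x \<in> residues_mod P. x ^ 3 mod P = (y ^ 2 - B) mod P})"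
proof -
  have on_curve: "P dvd y ^ 2 - x ^ 3 - B \<longleftrightarrow> x ^ 3 mod P = (y ^ 2 - B) mod P"
    for x y :: "'a poly"
  proof -
    have "y ^ 2 - x ^ 3 - B = - (x ^ 3 - (y ^ 2 - B))" by simp
    then show ?thesis by (simp only: dvd_minus_iff mod_eq_dvd_iff)
  qed
  show ?thesis
    using curve_point_nonsingular[OF assms] by (auto simp: on_curve mod_eq_0_iff_dvd image_iff)
qed

lemma num_points_red_eq:
  assumes "\<not> P dvd B" "(2::'a) \<noteq> 0" "(3::'a) \<noteq> 0"
  shows "complex_of_nat (num_points_red B P) =
           of_nat (CARD('a) ^ degree P) + 1
           + (\<Sum>y\<in>residues_mod P. cubic_sym \<zeta> P (y ^ 2 - B))
           + cnj (\<Sum>y\<in>residues_mod P. cubic_sym \<zeta> P (y ^ 2 - B))"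
proof -
  have "inj_on (\<lambda>(y, x). (x, y)) A" for A :: "('a poly \<times> 'a poly) set"
    by (auto simp: inj_on_def)
  then have "num_points_red B P =
      (\<Sum>y\<in>residues_mod P. card {x \<in> residues_mod P. x ^ 3 mod P = (y ^ 2 - B) mod P}) + 1"
    unfolding num_points_red_def nonsingular_points_eq_Sigma[OF assms]
    using finite_residues_mod[OF degree_pos] by (simp add: card_image card_SigmaI)
  then have "complex_of_nat (num_points_red B P) = 1 +
      (\<Sum>y\<in>residues_mod P. of_nat (card {x \<in> residues_mod P. x ^ 3 mod P = (y ^ 2 - B) mod P}))"
    by simp
  also have "\<dots> = 1 + (\<Sum>y\<in>residues_mod P. 1 + cubic_sym \<zeta> P (y ^ 2 - B) + cnj (cubic_sym \<zeta> P (y ^ 2 - B)))"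
    using card_cube_roots_mod_eq[OF mod_in_residues_mod[OF degree_pos]] by (simp add: cubic_sym_mod)
  also have "\<dots> = 1 + of_nat (CARD('a) ^ degree P)
      + (\<Sum>y\<in>residues_mod P. cubic_sym \<zeta> P (y ^ 2 - B))
      + cnj (\<Sum>y\<in>residues_mod P. cubic_sym \<zeta> P (y ^ 2 - B))"
    using card_residues_mod[OF degree_pos] by (simp add: sum.distrib cnj_sum)
  finally show ?thesis by (simp add: algebra_simps)
qed

end

lemma good_reduction_imp_not_dvd: "good_reduction B P \<Longrightarrow> \<not> P dvd B"
  unfolding good_reduction_def disc_short_def
  by (metis dvd_mult2 dvd_smult power2_eq_square)

lemma a_coeff_eq_neg_trace_lambda_P:
  fixes B P :: "'a::{finite,field} poly" and \<zeta> :: 'a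
  assumes char: "prime CHAR('a)" "CHAR('a) \<noteq> 2" "CHAR('a) \<noteq> 3"
    and q3: "CARD('a) mod 3 = 1"
    and zeta: "\<zeta> ^ 3 = 1" "\<zeta> \<noteq> 1"
    and P: "prime_poly P"
    and good: "good_reduction B P"
  shows "complex_of_real (a_coeff B P) = - (lambda_P \<zeta> B P + cnj (lambda_P \<zeta> B P))"
proof -
  have "CARD('a) ^ degree P mod 3 = 1"
    using power_mod[of "CARD('a)" 3 "degree P"] q3 by simp
  then have "CARD('a) ^ degree P = 3 * ((CARD('a) ^ degree P - 1) div 3) + 1" by presburger
  then interpret cubic_residue_setup P \<zeta> "(CARD('a) ^ degree P - 1) div 3"
    using P zeta by unfold_locales (simp_all add: prime_poly_imp_prime_elem)
  have "(2::'a) \<noteq> 0" "(3::'a) \<noteq> 0"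
    using of_nat_prime_nonzero[of 2] of_nat_prime_nonzero[of 3] char by auto
  then have points: "complex_of_nat (num_points_red B P) =
           of_nat (CARD('a) ^ degree P) + 1
           + (\<Sum>y\<in>residues_mod P. cubic_sym \<zeta> P (y ^ 2 - B))
           + cnj (\<Sum>y\<in>residues_mod P. cubic_sym \<zeta> P (y ^ 2 - B))"
    using num_points_red_eq good_reduction_imp_not_dvd[OF good] by blast
  have "sqrt (real CARD('a)) ^ degree P > 0" by simp
  then show ?thesis
    by (simp add: a_coeff_def lambda_P_def points field_simps)
qed

theorem lemma4p2:
  fixes B P :: "'a::{finite,field} poly" and \<zeta> :: 'a
  assumes char: "prime CHAR('a)" "CHAR('a) \<noteq> 2" "CHAR('a) \<noteq> 3"
    and q6: "CARD('a) mod 6 = 1"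
    and zeta: "\<zeta> ^ 3 = 1" "\<zeta> \<noteq> 1"
    and minB: "minimal_weierstrass_short B"
    and P: "prime_poly P"
    and good: "good_reduction B P"
  shows "(complex_of_real (a_star B P 1)
           = - (lambda_P \<zeta> B P + cnj (lambda_P \<zeta> B P))) \<and>
         (complex_of_real (a_star B P 2)
           = lambda_P \<zeta> B P ^ 2 + cnj (lambda_P \<zeta> B P) ^ 2
             + 2 * (complex_of_real (cmod (lambda_P \<zeta> B P) ^ 2) - 1)) \<and>
         (complex_of_real (a_star B P 3)
           = - (lambda_P \<zeta> B P ^ 3 + cnj (lambda_P \<zeta> B P) ^ 3)
             - 3 * (complex_of_real (cmod (lambda_P \<zeta> B P) ^ 2) - 1)
                 * (lambda_P \<zeta> B P + cnj (lambda_P \<zeta> B P)))"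
proof -
  have "CARD('a) mod 3 = 1" using q6 by presburger
  then have a: "complex_of_real (a_coeff B P) = - (lambda_P \<zeta> B P + cnj (lambda_P \<zeta> B P))"
    using a_coeff_eq_neg_trace_lambda_P char zeta P good by blast
  have "degree P \<ge> 1" using P prime_poly_imp_prime_elem prime_elem_poly_degree_pos by blast
  note a_star = a_star_good_reduction[OF this good]
  show ?thesis
    unfolding complex_norm_square
    unfolding a_star of_real_diff of_real_power of_real_mult of_real_numeral a
    by (simp add: algebra_simps power2_eq_square power3_eq_cube)
qed

end
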